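(* For each $n\ge1$ and even $h\ge0$, the number $|\mathrm{UMap}(n,\mathbf N_h)|$ of $n$-vertex unicellular maps in $\mathbf N_h$ satisfies $|\mathrm{UMap}(n,\mathbf N_h)|\le c^{n+h}h^h$, where $c=2^7e^{3/2}$.
   Context: A map is a connected pseudograph (loops and multiple edges allowed, not necessarily simple) cellularly embedded in a surface, considered unlabelled and unrooted (up to isomorphism); it is unicellular if it has exactly one face. $\mathbf N_h$ is the non-orientable surface of Euler genus $h$, with $\mathbf N_0$ meaning the sphere. Convention $0^0=1$. *)

theory Defs
  imports Complex_Main
begin

text \<open>Combinatorial maps in the flag (graph-encoded map) representation.
A map with E edges is given by three involutions t0, t1, t2 on the flag set
{..<4*E}: t0 (vertex-changing), t1 (edge-changing), t2 (face-changing).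
The map with E = 0 encodes the trivial map (one vertex, no edges) on the sphere.\<close>

type_synonym fmap = "nat \<times> (nat \<Rightarrow> nat) \<times> (nat \<Rightarrow> nat) \<times> (nat \<Rightarrow> nat)"

definition flags :: "fmap \<Rightarrow> nat set" where
  "flags M = {..<4 * fst M}"

definition tau0 :: "fmap \<Rightarrow> nat \<Rightarrow> nat" where "tau0 M = fst (snd M)"
definition tau1 :: "fmap \<Rightarrow> nat \<Rightarrow> nat" where "tau1 M = fst (snd (snd M))"
definition tau2 :: "fmap \<Rightarrow> nat \<Rightarrow> nat" where "tau2 M = snd (snd (snd M))"

definition fpf_involution_on :: "nat set \<Rightarrow> (nat \<Rightarrow> nat) \<Rightarrow> bool" where
  "fpf_involution_on S t \<longleftrightarrow>
     (\<forall>x\<in>S. t x \<in> S \<and> t (t x) = x \<and> t x \<noteq> x) \<and> (\<forall>x. x \<notin> S \<longrightarrow> t x = x)"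

definition orbit_rel :: "nat set \<Rightarrow> (nat \<Rightarrow> nat) list \<Rightarrow> (nat \<times> nat) set" where
  "orbit_rel S ts = {(x, t x) | x t. x \<in> S \<and> t \<in> set ts}\<^sup>*"

definition num_orbits :: "nat set \<Rightarrow> (nat \<Rightarrow> nat) list \<Rightarrow> nat" where
  "num_orbits S ts = card (S // orbit_rel S ts)"

definition is_map :: "fmap \<Rightarrow> bool" where
  "is_map M \<longleftrightarrow>
     fpf_involution_on (flags M) (tau0 M) \<and>
     fpf_involution_on (flags M) (tau1 M) \<and>
     fpf_involution_on (flags M) (tau2 M) \<and>
     (\<forall>x. tau0 M (tau2 M x) = tau2 M (tau0 M x)) \<and>
     (\<forall>x\<in>flags M. tau0 M (tau2 M x) \<noteq> x) \<and>
     (fst M = 0 \<or> num_orbits (flags M) [tau0 M, tau1 M, tau2 M] = 1)"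

definition num_vertices :: "fmap \<Rightarrow> nat" where
  "num_vertices M = (if fst M = 0 then 1 else num_orbits (flags M) [tau1 M, tau2 M])"

definition num_edges :: "fmap \<Rightarrow> nat" where
  "num_edges M = fst M"

definition num_faces :: "fmap \<Rightarrow> nat" where
  "num_faces M = (if fst M = 0 then 1 else num_orbits (flags M) [tau0 M, tau1 M])"

definition euler_genus :: "fmap \<Rightarrow> int" where
  "euler_genus M = 2 - int (num_vertices M) + int (num_edges M) - int (num_faces M)"

definition orientable :: "fmap \<Rightarrow> bool" where
  "orientable M \<longleftrightarrow> (\<exists>c :: nat \<Rightarrow> bool. \<forall>x\<in>flags M.
       c (tau0 M x) \<noteq> c x \<and> c (tau1 M x) \<noteq> c x \<and> c (tau2 M x) \<noteq> c x)"

text \<open>The map lies in N_h: Euler genus h, and non-orientable if h > 0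
 (N_0 is the sphere).\<close>
definition in_N :: "nat \<Rightarrow> fmap \<Rightarrow> bool" where
  "in_N h M \<longleftrightarrow> euler_genus M = int h \<and> (h > 0 \<longrightarrow> \<not> orientable M)"

definition map_iso :: "(fmap \<times> fmap) set" where
  "map_iso = {(M, M'). fst M = fst M' \<and>
      (\<exists>\<sigma>. bij_betw \<sigma> (flags M) (flags M') \<and>
        (\<forall>x\<in>flags M. \<sigma> (tau0 M x) = tau0 M' (\<sigma> x) \<and>
                      \<sigma> (tau1 M x) = tau1 M' (\<sigma> x) \<and>
                      \<sigma> (tau2 M x) = tau2 M' (\<sigma> x)))}"

definition UMap_reps :: "nat \<Rightarrow> nat \<Rightarrow> fmap set" where
  "UMap_reps n h = {M. is_map M \<and> num_vertices M = n \<and> num_faces M = 1 \<and> in_N h M}"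

definition num_UMap :: "nat \<Rightarrow> nat \<Rightarrow> nat" where
  "num_UMap n h = card (UMap_reps n h // map_iso)"

end

theory Submission
  imports Defs "HOL-Library.FuncSet" "HOL-Combinatorics.Cycles"
    "HOL-Combinatorics.Multiset_Permutations"
begin

(* By Euler's formula a unicellular map in N_h with n vertices has E = n + h - 1 edges. Every
   vertex is a cycle of flags alternating between t2 and t1, of even length. Listing the n vertices
   in some order and numbering the flags of each vertex consecutively along its cycle relabels the
   map into a normal form on the flags {..<4E}: t2 swaps 2i and 2i + 1, t1 is determined by the set
   of first flags of the vertices, and t0 is determined by its values at one half-edge of every
   edge, so there are at most 16^E (4E)^E normal forms. By connectivity, a normal form together with
   the label of one flag determines the listing; hence each isomorphism class owns at least
   n!/(4E) normal forms, distinct classes own disjoint sets of them, and the number of classes is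
   at most 4E 16^E (4E)^E / n!. The estimates E^E <= e^E E!, E! <= n! E^h and E^h <= e^E h^h turn
   this into the stated bound. *)

section \<open>Involutions and orbits\<close>

lemma fpf_involution_onD:
  assumes "fpf_involution_on S t"
  shows "t (t x) = x" and "x \<in> S \<Longrightarrow> t x \<in> S" and "x \<in> S \<Longrightarrow> t x \<noteq> x"
  using assms unfolding fpf_involution_on_def by (cases "x \<in> S"; auto)+

lemma sym_orbit_rel:
  assumes "\<And>t. t \<in> set ts \<Longrightarrow> fpf_involution_on S t"
  shows "sym (orbit_rel S ts)"
proof -
  let ?G = "{(x, t x) | x t. x \<in> S \<and> t \<in> set ts}"
  have "?G\<inverse> \<subseteq> ?G"
  proof
    fix p assume "p \<in> ?G\<inverse>"
    then obtain x t where p: "p = (t x, x)" and "x \<in> S" and t: "t \<in> set ts"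
      by auto
    then have "t x \<in> S" and "p = (t x, t (t x))"
      using fpf_involution_onD[OF assms[OF t]] p by auto
    then show "p \<in> ?G"
      using t by blast
  qed
  then have "sym ?G"
    by (meson converseI subsetD symI)
  then show ?thesis
    unfolding orbit_rel_def by (rule sym_rtrancl)
qed

lemma orbit_rel_Image_eq:
  assumes "sym (orbit_rel S ts)" and "(x, y) \<in> orbit_rel S ts"
  shows "orbit_rel S ts `` {x} = orbit_rel S ts `` {y}"
proof -
  have "trans (orbit_rel S ts)"
    unfolding orbit_rel_def by (rule trans_rtrancl)
  with assms show ?thesis
    by (auto simp: sym_def dest: transD)
qed

locale involution_pair =
  fixes F :: "nat set" and a b :: "nat \<Rightarrow> nat"
  assumes finite_F: "finite F"
    and fpf_a: "fpf_involution_on F a" and fpf_b: "fpf_involution_on F b"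
begin

lemmas involutive = fpf_involution_onD(1)[OF fpf_a] fpf_involution_onD(1)[OF fpf_b]
lemmas closed = fpf_involution_onD(2)[OF fpf_a] fpf_involution_onD(2)[OF fpf_b]
lemmas no_fixpoint = fpf_involution_onD(3)[OF fpf_a] fpf_involution_onD(3)[OF fpf_b]

primrec walk :: "nat \<Rightarrow> nat \<Rightarrow> nat" where
  "walk x 0 = x"
| "walk x (Suc i) = (if even i then a (walk x i) else b (walk x i))"

text \<open>The walk is the projection of the orbit of (x, False) under the injective map alt_step,
  whose Boolean component records which of the two involutions acts next.\<close>

definition alt_step :: "nat \<times> bool \<Rightarrow> nat \<times> bool" where
  "alt_step u = (if snd u then (b (fst u), False) else (a (fst u), True))"

definition walk_period :: "nat \<Rightarrow> nat" where
  "walk_period x = least_power alt_step (x, False)"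

lemma alt_step_funpow: "(alt_step ^^ i) (x, False) = (walk x i, odd i)"
  by (induction i) (simp_all add: alt_step_def)

lemma walk_in: "x \<in> F \<Longrightarrow> walk x i \<in> F"
  by (induction i) (simp_all add: closed)

lemma inj_alt_step: "inj alt_step"
  unfolding inj_def alt_step_def
  by (auto split: if_splits simp: prod_eq_iff) (metis involutive)+

lemma alt_step_funpow_reverse:
  "(alt_step ^^ k) (apsnd Not ((alt_step ^^ k) u)) = apsnd Not u"
proof (induction k arbitrary: u)
  case (Suc k)
  have "alt_step (apsnd Not (alt_step v)) = apsnd Not v" for v
    by (cases v) (auto simp: alt_step_def involutive)
  then show ?case
    using Suc[of "alt_step u"] by (simp add: funpow_swap1)
qed simp

lemma walk_period:
  assumes "x \<in> F"
  shows "walk_period x > 0" and "walk x (walk_period x) = x" and "even (walk_period x)"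
proof -
  have "finite {y. \<exists>n. y = (alt_step ^^ n) (x, False)}"
    by (rule finite_subset[of _ "F \<times> UNIV"]) (auto simp: alt_step_funpow walk_in assms finite_F)
  then obtain n where "(alt_step ^^ n) (x, False) = (x, False)" "n > 0"
    using funpow_inj_finite[OF inj_alt_step] by blast
  from least_powerI[OF this] show "walk_period x > 0" "walk x (walk_period x) = x" "even (walk_period x)"
    by (simp_all add: walk_period_def alt_step_funpow)
qed

text \<open>A closed walk of odd length would have a middle step fixing a flag.\<close>

lemma alt_step_funpow_odd_neq:
  assumes "x \<in> F" and "odd k"
  shows "(alt_step ^^ k) (x, False) \<noteq> (x, True)"
proof
  assume return: "(alt_step ^^ k) (x, False) = (x, True)"
  obtain l where k: "k = Suc (2 * l)"
    using \<open>odd k\<close> oddE by (metis Suc_eq_plus1)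
  define z where "z = (alt_step ^^ l) (x, False)"
  have "(alt_step ^^ l) (alt_step z) = (alt_step ^^ k) (x, False)"
    by (simp add: z_def k mult_2 funpow_add funpow_swap1)
  then have "(alt_step ^^ l) (alt_step z) = (x, True)"
    using return by simp
  moreover have "(alt_step ^^ l) (apsnd Not z) = (x, True)"
    using alt_step_funpow_reverse[of l "(x, False)"] by (simp add: z_def)
  ultimately have "alt_step z = apsnd Not z"
    using injD[OF inj_fn[OF inj_alt_step]] by metis
  moreover have "fst z \<in> F"
    using assms(1) by (simp add: z_def alt_step_funpow walk_in)
  ultimately show False
    by (cases z) (auto simp: alt_step_def no_fixpoint split: if_splits)
qed

lemma alt_step_funpow_eq_imp_eq:
  assumes "i \<le> j" and "j < walk_period x"
    and "(alt_step ^^ i) (x, False) = (alt_step ^^ j) (x, False)"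
  shows "i = j"
proof -
  have "walk_period x dvd j - i"
    using funpow_diff[OF inj_alt_step assms(1,3)] by (simp add: walk_period_def least_power_minimal)
  show ?thesis
  proof (rule ccontr)
    assume "i \<noteq> j"
    then have "0 < j - i" and "j - i < walk_period x"
      using assms(1,2) by simp_all
    then show False
      using nat_dvd_not_less \<open>walk_period x dvd j - i\<close> by blast
  qed
qed

text \<open>Positions of different parity cannot carry the same flag: walking back from one to the
  other would be a closed walk of odd length.\<close>

lemma inj_on_walk:
  assumes "x \<in> F"
  shows "inj_on (walk x) {..<walk_period x}"
proof (rule inj_onI)
  fix i j assume i: "i \<in> {..<walk_period x}" and j: "j \<in> {..<walk_period x}"
    and eq: "walk x i = walk x j"
  show "i = j"
  proof (cases "odd i = odd j")
    case True
    then have same: "(alt_step ^^ i) (x, False) = (alt_step ^^ j) (x, False)"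
      using eq by (simp add: alt_step_funpow)
    show ?thesis
    proof (cases "i \<le> j")
      case True
      then show ?thesis
        using alt_step_funpow_eq_imp_eq[OF True _ same] j by simp
    next
      case False
      then show ?thesis
        using alt_step_funpow_eq_imp_eq[of j i x] same i by simp
    qed
  next
    case False
    then have "(alt_step ^^ j) (x, False) = apsnd Not ((alt_step ^^ i) (x, False))"
      using eq by (simp add: alt_step_funpow)
    then have "(alt_step ^^ (i + j)) (x, False) = (x, True)"
      using alt_step_funpow_reverse[of i "(x, False)"] by (simp add: funpow_add)
    then show ?thesis
      using alt_step_funpow_odd_neq[OF assms, of "i + j"] False by auto
  qed
qed

lemma a_walk: "a (walk x i) = walk x (if even i then Suc i else i - 1)"
  by (cases i) (simp_all add: involutive)

lemma b_walk:
  assumes "x \<in> F"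
  shows "b (walk x i) = walk x (if i = 0 then walk_period x - 1 else if odd i then Suc i else i - 1)"
proof (cases i)
  case 0
  obtain p where p: "walk_period x = Suc p" "odd p"
    using walk_period[OF assms] by (metis even_Suc gr0_implies_Suc)
  then have "b (walk x p) = x"
    using walk_period(2)[OF assms] by simp
  then show ?thesis
    using p 0 by (metis diff_Suc_1 involutive(2) walk.simps(1))
qed (simp_all add: involutive)

lemma walk_mod:
  assumes "x \<in> F"
  shows "walk x (i mod walk_period x) = walk x i"
  using funpow_mod_eq[where f = alt_step and n = "walk_period x" and x = "(x, False)" and m = i]
    walk_period(2,3)[OF assms]
  by (simp add: alt_step_funpow)

lemma range_walk:
  assumes "x \<in> F"
  shows "range (walk x) = walk x ` {..<walk_period x}"
proof (intro equalityI subsetI)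
  fix y assume "y \<in> range (walk x)"
  then obtain i where "y = walk x i"
    by auto
  then show "y \<in> walk x ` {..<walk_period x}"
    using walk_mod[OF assms, of i] walk_period(1)[OF assms]
    by (metis imageI lessThan_iff mod_less_divisor)
qed auto

lemma orbit_rel_Image_eq_walk:
  assumes "x \<in> F"
  shows "orbit_rel F [b, a] `` {x} = walk x ` {..<walk_period x}"
proof -
  have "orbit_rel F [b, a] `` {x} \<subseteq> range (walk x)"
  proof
    fix y assume "y \<in> orbit_rel F [b, a] `` {x}"
    then have "(x, y) \<in> {(x, t x) | x t. x \<in> F \<and> t \<in> set [b, a]}\<^sup>*"
      by (simp add: orbit_rel_def)
    then show "y \<in> range (walk x)"
    proof (induction rule: rtrancl_induct)
      case base
      show ?case using walk.simps(1) by (metis rangeI)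
    next
      case (step y z)
      obtain i where y: "y = walk x i"
        using step(3) by auto
      have "z = a y \<or> z = b y"
        using step(2) by auto
      moreover have "a y \<in> range (walk x)" and "b y \<in> range (walk x)"
        unfolding y a_walk b_walk[OF assms] by (rule rangeI)+
      ultimately show ?case
        by blast
    qed
  qed
  moreover have "(x, walk x i) \<in> orbit_rel F [b, a]" for i
  proof (induction i)
    case (Suc i)
    have "(walk x i, walk x (Suc i)) \<in> {(x, t x) | x t. x \<in> F \<and> t \<in> set [b, a]}"
      using walk_in[OF assms, of i] by auto
    with Suc show ?case
      unfolding orbit_rel_def by (rule rtrancl_into_rtrancl)
  qed (simp add: orbit_rel_def)
  ultimately show ?thesis
    using range_walk[OF assms] by auto
qed

end

section \<open>Normal forms of maps\<close>

definition pair_swap :: "nat \<Rightarrow> nat \<Rightarrow> nat" where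
  "pair_swap E z = (if z < 4 * E then if even z then Suc z else z - 1 else z)"

lemma pair_swap_div_2 [simp]: "pair_swap E z div 2 = z div 2"
  by (auto simp: pair_swap_def elim: oddE)

lemma div_2_eq_cases:
  assumes "z < 4 * E" and "y div 2 = z div 2"
  shows "y = z \<or> y = pair_swap E z"
  using assms by (auto simp: pair_swap_def) presburger+

text \<open>With S the set of first flags of consecutive blocks [s, e) of even length, this is the
  involution pairing s + 1 with s + 2, s + 3 with s + 4, ..., and e - 1 with s inside every
  block; together with pair_swap it makes each block one alternating cycle.\<close>

definition block_cycle :: "nat \<Rightarrow> nat set \<Rightarrow> nat \<Rightarrow> nat" where
  "block_cycle E S z =
     (if z < 4 * E then
        let s = Max {s \<in> S. s \<le> z}; e = Min ({s \<in> S. z < s} \<union> {4 * E}) in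
        if even z then (if z = s then e - 1 else z - 1) else (if Suc z = e then s else Suc z)
      else z)"

lemma strict_mono_on_block_unique:
  fixes off :: "nat \<Rightarrow> nat"
  assumes mono: "strict_mono_on {..n} off" and "k < n" and "k' < n"
    and "off k \<le> z" "z < off (Suc k)" and "off k' \<le> z" "z < off (Suc k')"
  shows "k = k'"
proof (rule ccontr)
  assume "k \<noteq> k'"
  then have "Suc k \<le> k' \<or> Suc k' \<le> k"
    by linarith
  then have "off (Suc k) \<le> off k' \<or> off (Suc k') \<le> off k"
    using assms(2,3) strict_mono_on_leD[OF mono] by auto
  with assms(4-7) show False
    by linarith
qed

lemma block_cycle_in_block:
  fixes off :: "nat \<Rightarrow> nat"
  assumes mono: "strict_mono_on {..n} off" and last: "off n = 4 * E"
    and k: "k < n" and z: "off k \<le> z" "z < off (Suc k)"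
  shows "block_cycle E (off ` {..<n}) z =
    (if even z then (if z = off k then off (Suc k) - 1 else z - 1)
     else (if Suc z = off (Suc k) then off k else Suc z))"
proof -
  have less_iff: "off i < off j \<longleftrightarrow> i < j" if "i \<le> n" "j \<le> n" for i j
    using strict_mono_on_less[OF mono] that by simp
  have le_iff: "off i \<le> off j \<longleftrightarrow> i \<le> j" if "i \<le> n" "j \<le> n" for i j
    using strict_mono_on_less_eq[OF mono] that by simp
  have "Max {s \<in> off ` {..<n}. s \<le> z} = off k"
  proof (rule Max_eqI)
    fix s assume "s \<in> {s \<in> off ` {..<n}. s \<le> z}"
    then obtain j where "j < n" "s = off j" "off j < off (Suc k)"
      using z by auto
    then show "s \<le> off k"
      using k less_iff[of j "Suc k"] le_iff[of j k] by simp
  qed (use k z in auto)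
  moreover have "Min ({s \<in> off ` {..<n}. z < s} \<union> {4 * E}) = off (Suc k)"
  proof (rule Min_eqI)
    fix s assume "s \<in> {s \<in> off ` {..<n}. z < s} \<union> {4 * E}"
    then consider j where "j < n" "s = off j" "off k < off j" | "s = off n"
      using z last by fastforce
    then show "off (Suc k) \<le> s"
      using k less_iff le_iff by cases (simp_all add: Suc_le_eq)
  next
    show "off (Suc k) \<in> {s \<in> off ` {..<n}. z < s} \<union> {4 * E}"
      using k z last by (cases "Suc k = n") auto
  qed simp
  moreover have "z < 4 * E"
    using z(2) le_iff[of "Suc k" n] k last by simp
  ultimately show ?thesis
    by (simp add: block_cycle_def Let_def)
qed

definition compatible_t0 :: "nat \<Rightarrow> (nat \<Rightarrow> nat) \<Rightarrow> bool" where
  "compatible_t0 E t \<longleftrightarrow> fpf_involution_on {..<4 * E} t \<and>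
     (\<forall>z<4 * E. t (pair_swap E z) = pair_swap E (t z) \<and> t (pair_swap E z) \<noteq> z)"

text \<open>The pairs {2i, 2i + 1} swapped by pair_swap are the half-edges; a compatible t0
  matches them into edges.\<close>

definition half_edge_partner :: "(nat \<Rightarrow> nat) \<Rightarrow> nat \<Rightarrow> nat" where
  "half_edge_partner t i = t (2 * i) div 2"

definition lower_half_edges :: "nat \<Rightarrow> (nat \<Rightarrow> nat) \<Rightarrow> nat set" where
  "lower_half_edges E t = {i. i < 2 * E \<and> i < half_edge_partner t i}"

definition t0_code :: "nat \<Rightarrow> (nat \<Rightarrow> nat) \<Rightarrow> nat set \<times> (nat \<Rightarrow> nat)" where
  "t0_code E t = (lower_half_edges E t, restrict (\<lambda>i. t (2 * i)) (lower_half_edges E t))"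

definition t0_codes :: "nat \<Rightarrow> (nat set \<times> (nat \<Rightarrow> nat)) set" where
  "t0_codes E = (SIGMA L:{L. L \<subseteq> {..<2 * E} \<and> card L \<le> E}. L \<rightarrow>\<^sub>E {..<4 * E})"

context
  fixes E :: nat and t :: "nat \<Rightarrow> nat"
  assumes compatible: "compatible_t0 E t"
begin

lemma compatible_t0D:
  assumes "z < 4 * E"
  shows "t z < 4 * E" and "t (t z) = z" and "t z \<noteq> z"
    and "t (pair_swap E z) = pair_swap E (t z)" and "t (pair_swap E z) \<noteq> z"
  using compatible assms fpf_involution_onD[of "{..<4 * E}" t z]
  unfolding compatible_t0_def by auto

lemma half_edge_partner_less: "i < 2 * E \<Longrightarrow> half_edge_partner t i < 2 * E"
  using compatible_t0D(1)[of "2 * i"] by (simp add: half_edge_partner_def)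

lemma half_edge_partner_neq:
  assumes "i < 2 * E"
  shows "half_edge_partner t i \<noteq> i"
proof
  assume "half_edge_partner t i = i"
  moreover have z: "2 * i < 4 * E"
    using assms by simp
  ultimately have "t (2 * i) = 2 * i \<or> t (2 * i) = pair_swap E (2 * i)"
    using div_2_eq_cases[of "2 * i" E "t (2 * i)"] by (simp add: half_edge_partner_def)
  moreover have "t (2 * i) \<noteq> 2 * i"
    using compatible_t0D(3)[OF z] .
  moreover have "t (2 * i) \<noteq> pair_swap E (2 * i)"
    using compatible_t0D(2,5)[OF z] by metis
  ultimately show False
    by blast
qed

text \<open>Hence t0 is determined by its values at the lower half-edge of every edge.\<close>

lemma t0_from_partner:
  assumes "i < 2 * E"
  defines "j \<equiv> half_edge_partner t i"
  shows "t (2 * i) = (if t (2 * j) = 2 * i then 2 * j else pair_swap E (2 * j))"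
proof -
  have i: "2 * i < 4 * E" and j: "2 * j < 4 * E"
    using assms half_edge_partner_less[OF assms(1)] by simp_all
  have "t (2 * i) = 2 * j \<or> t (2 * i) = pair_swap E (2 * j)"
    using div_2_eq_cases[OF j, of "t (2 * i)"] by (simp add: j_def half_edge_partner_def)
  moreover have "pair_swap E (2 * j) \<noteq> 2 * j"
    using j by (simp add: pair_swap_def)
  ultimately show ?thesis
    using compatible_t0D(2)[OF i] compatible_t0D(2)[OF j] by auto
qed

lemma half_edge_partner_involutive:
  assumes "i < 2 * E"
  shows "half_edge_partner t (half_edge_partner t i) = i"
proof -
  define j where "j = half_edge_partner t i"
  have i: "2 * i < 4 * E" and u: "t (2 * i) < 4 * E"
    using assms compatible_t0D(1)[of "2 * i"] by simp_all
  have "2 * j = t (2 * i) \<or> 2 * j = pair_swap E (t (2 * i))"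
    using div_2_eq_cases[OF u, of "2 * j"] by (simp add: j_def half_edge_partner_def)
  then have "t (2 * j) = 2 * i \<or> t (2 * j) = pair_swap E (2 * i)"
    using compatible_t0D(2,4)[OF u] compatible_t0D(2)[OF i] by auto
  then show ?thesis
    by (auto simp: half_edge_partner_def j_def)
qed

lemma card_lower_half_edges: "card (lower_half_edges E t) \<le> E"
proof -
  let ?L = "lower_half_edges E t"
  have L: "?L \<subseteq> {..<2 * E}"
    by (auto simp: lower_half_edges_def)
  then have fin: "finite ?L"
    using finite_subset by blast
  have disj: "?L \<inter> half_edge_partner t ` ?L = {}"
    using half_edge_partner_involutive by (fastforce simp: lower_half_edges_def)
  have inj: "inj_on (half_edge_partner t) ?L"
    by (rule inj_onI) (metis half_edge_partner_involutive L lessThan_iff subsetD)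
  have "card ?L + card ?L = card (?L \<union> half_edge_partner t ` ?L)"
    using card_Un_disjoint[OF fin finite_imageI[OF fin] disj] card_image[OF inj] by simp
  also have "\<dots> \<le> card {..<2 * E}"
    using L half_edge_partner_less by (intro card_mono) auto
  finally show ?thesis
    by simp
qed

lemma t0_code_in: "t0_code E t \<in> t0_codes E"
proof -
  have "lower_half_edges E t \<subseteq> {..<2 * E}"
    by (auto simp: lower_half_edges_def)
  moreover have "restrict (\<lambda>i. t (2 * i)) (lower_half_edges E t) \<in>
      lower_half_edges E t \<rightarrow>\<^sub>E {..<4 * E}"
    using compatible_t0D(1) by (auto simp: lower_half_edges_def)
  ultimately show ?thesis
    using card_lower_half_edges by (simp add: t0_code_def t0_codes_def)
qed

end

lemma compatible_t0_eqI:
  assumes "compatible_t0 E t" and "compatible_t0 E t'"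
    and even_eq: "\<And>i. i < 2 * E \<Longrightarrow> t (2 * i) = t' (2 * i)"
  shows "t = t'"
proof
  fix z
  show "t z = t' z"
  proof (cases "z < 4 * E")
    case True
    have i: "z div 2 < 2 * E" and z2: "2 * (z div 2) < 4 * E"
      using True by simp_all
    have "z = 2 * (z div 2) \<or> z = pair_swap E (2 * (z div 2))"
      using div_2_eq_cases[OF z2, of z] by simp
    then show ?thesis
      using even_eq[OF i] compatible_t0D(4)[OF assms(1) z2] compatible_t0D(4)[OF assms(2) z2]
      by metis
  next
    case False
    then show ?thesis
      using assms unfolding compatible_t0_def fpf_involution_on_def by simp
  qed
qed

lemma inj_on_t0_code: "inj_on (t0_code E) (Collect (compatible_t0 E))"
proof (rule inj_onI, simp)
  fix t t' assume t: "compatible_t0 E t" and t': "compatible_t0 E t'"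
    and code: "t0_code E t = t0_code E t'"
  let ?L = "lower_half_edges E t"
  have L: "lower_half_edges E t' = ?L"
    using code by (simp add: t0_code_def)
  have on_L: "t (2 * i) = t' (2 * i)" if "i \<in> ?L" for i
    using code that L by (simp add: t0_code_def restrict_def fun_eq_iff split: if_splits)
  show "t = t'"
  proof (rule compatible_t0_eqI[OF t t'])
    fix i assume i: "i < 2 * E"
    show "t (2 * i) = t' (2 * i)"
    proof (cases "i \<in> ?L")
      case False
      define j where "j = half_edge_partner t i"
      have j: "j < 2 * E" "half_edge_partner t j = i"
        using half_edge_partner_less[OF t i] half_edge_partner_involutive[OF t i] by (simp_all add: j_def)
      then have "j \<in> ?L"
        using False i half_edge_partner_neq[OF t i] by (auto simp: lower_half_edges_def j_def)
      then have "half_edge_partner t' i = j"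
        using on_L j half_edge_partner_involutive[OF t' j(1)] by (simp add: half_edge_partner_def)
      then show ?thesis
        using t0_from_partner[OF t i] t0_from_partner[OF t' i] on_L[OF \<open>j \<in> ?L\<close>]
        by (simp add: j_def)
    qed (rule on_L)
  qed
qed

lemma card_t0_codes: "card (t0_codes E) \<le> 4 ^ E * (4 * E) ^ E"
proof -
  have "card (t0_codes E) = (\<Sum>L\<in>{L. L \<subseteq> {..<2 * E} \<and> card L \<le> E}. (4 * E) ^ card L)"
    unfolding t0_codes_def
    by (subst card_SigmaI) (auto simp: card_PiE finite_subset finite_PiE intro!: sum.cong)
  also have "\<dots> \<le> (\<Sum>L\<in>{L. L \<subseteq> {..<2 * E} \<and> card L \<le> E}. (4 * E) ^ E)"
  proof (rule sum_mono)
    fix L assume "L \<in> {L. L \<subseteq> {..<2 * E} \<and> card L \<le> E}"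
    then show "(4 * E) ^ card L \<le> (4 * E) ^ E"
      using power_increasing[of "card L" E "4 * E"] by (cases "E = 0") auto
  qed
  also have "\<dots> \<le> (\<Sum>L\<in>Pow {..<2 * E}. (4 * E) ^ E)"
    by (rule sum_mono2) auto
  also have "\<dots> = 4 ^ E * (4 * E) ^ E"
    by (simp add: card_Pow power_mult)
  finally show ?thesis .
qed

lemma finite_t0_codes: "finite (t0_codes E)"
proof -
  have "finite {L. L \<subseteq> {..<2 * E} \<and> card L \<le> E}"
    by (rule finite_subset[of _ "Pow {..<2 * E}"]) auto
  moreover have "finite L" if "L \<subseteq> {..<2 * E}" for L
    using that finite_lessThan by (rule finite_subset)
  ultimately show ?thesis
    unfolding t0_codes_def by (intro finite_SigmaI finite_PiE) auto
qed

lemma t0_code_image_subset: "t0_code E ` Collect (compatible_t0 E) \<subseteq> t0_codes E"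
  using t0_code_in by blast

lemma card_compatible_t0: "card (Collect (compatible_t0 E)) \<le> 4 ^ E * (4 * E) ^ E"
  using card_inj_on_le[OF inj_on_t0_code t0_code_image_subset finite_t0_codes] card_t0_codes
  by (rule order_trans)

lemma finite_compatible_t0: "finite (Collect (compatible_t0 E))"
  using inj_on_finite[OF inj_on_t0_code t0_code_image_subset finite_t0_codes] .

definition normal_maps :: "nat \<Rightarrow> fmap set" where
  "normal_maps E = {N. fst N = E \<and> tau2 N = pair_swap E \<and> compatible_t0 E (tau0 N) \<and>
     (\<exists>S \<subseteq> (\<lambda>j. 2 * j) ` {..<2 * E}. tau1 N = block_cycle E S)}"

lemma fmap_eq_components: "N = (fst N, tau0 N, tau1 N, tau2 N)"
  by (simp add: tau0_def tau1_def tau2_def)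

lemma normal_maps_subset:
  "normal_maps E \<subseteq> (\<lambda>(S, t). (E, t, block_cycle E S, pair_swap E)) `
     (Pow ((\<lambda>j. 2 * j) ` {..<2 * E}) \<times> Collect (compatible_t0 E))"
proof
  fix N assume "N \<in> normal_maps E"
  then obtain S where S: "S \<subseteq> (\<lambda>j. 2 * j) ` {..<2 * E}" and "tau1 N = block_cycle E S"
    and "fst N = E" "tau2 N = pair_swap E" "compatible_t0 E (tau0 N)"
    unfolding normal_maps_def by blast
  then have "N = (\<lambda>(S, t). (E, t, block_cycle E S, pair_swap E)) (S, tau0 N)"
    and "(S, tau0 N) \<in> Pow ((\<lambda>j. 2 * j) ` {..<2 * E}) \<times> Collect (compatible_t0 E)"
    using fmap_eq_components[of N] by simp_all
  then show "N \<in> (\<lambda>(S, t). (E, t, block_cycle E S, pair_swap E)) `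
      (Pow ((\<lambda>j. 2 * j) ` {..<2 * E}) \<times> Collect (compatible_t0 E))"
    by (rule image_eqI)
qed

lemma finite_normal_maps: "finite (normal_maps E)"
  using finite_compatible_t0 by (intro finite_subset[OF normal_maps_subset]) simp

lemma card_normal_maps: "card (normal_maps E) \<le> 16 ^ E * (4 * E) ^ E"
proof -
  let ?P = "Pow ((\<lambda>j. 2 * j) ` {..<2 * E}) \<times> Collect (compatible_t0 E)"
  have finP: "finite ?P"
    using finite_compatible_t0 by simp
  have "card (normal_maps E) \<le> card ?P"
    using card_mono[OF finite_imageI[OF finP] normal_maps_subset] card_image_le[OF finP]
    by (rule le_trans)
  also have "\<dots> = 2 ^ (2 * E) * card (Collect (compatible_t0 E))"
    by (simp add: card_cartesian_product card_Pow card_image inj_on_def)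
  also have "\<dots> \<le> 2 ^ (2 * E) * (4 ^ E * (4 * E) ^ E)"
    using card_compatible_t0 by simp
  also have "\<dots> = 16 ^ E * (4 * E) ^ E"
  proof -
    have "(2::nat) ^ (2 * E) * 4 ^ E = (2 ^ 2 * 4) ^ E"
      by (simp only: power_mult power_mult_distrib)
    then show ?thesis
      by simp
  qed
  finally show ?thesis .
qed

section \<open>Relabelling and isomorphism\<close>

definition conjugate :: "(nat \<Rightarrow> nat) \<Rightarrow> nat set \<Rightarrow> (nat \<Rightarrow> nat) \<Rightarrow> nat \<Rightarrow> nat" where
  "conjugate s S t z = (if z \<in> S then s (t (inv_into S s z)) else z)"

context
  fixes s :: "nat \<Rightarrow> nat" and S :: "nat set"
  assumes bij: "bij_betw s S S"
begin

lemma conjugate_apply: "x \<in> S \<Longrightarrow> conjugate s S t (s x) = s (t x)"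
  using bij by (simp add: conjugate_def bij_betw_apply bij_betw_inv_into_left)

lemma conjugate_outside: "z \<notin> S \<Longrightarrow> conjugate s S t z = z"
  by (simp add: conjugate_def)

lemma fpf_involution_on_conjugate:
  assumes "fpf_involution_on S t"
  shows "fpf_involution_on S (conjugate s S t)"
  unfolding fpf_involution_on_def
proof (intro conjI ballI allI impI)
  fix z assume "z \<in> S"
  then obtain x where x: "x \<in> S" "z = s x"
    using bij by (metis bij_betw_imp_surj_on imageE)
  have tx: "t x \<in> S" "t (t x) = x" "t x \<noteq> x"
    using fpf_involution_onD[OF assms] x(1) by auto
  show "conjugate s S t z \<in> S"
    using x tx bij by (simp add: conjugate_apply bij_betw_apply)
  show "conjugate s S t (conjugate s S t z) = z"
    using x tx by (simp add: conjugate_apply)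
  show "conjugate s S t z \<noteq> z"
    using x tx inj_on_eq_iff[OF bij_betw_imp_inj_on[OF bij]] by (simp add: conjugate_apply)
qed (simp add: conjugate_outside)

end

definition relabel :: "(nat \<Rightarrow> nat) \<Rightarrow> fmap \<Rightarrow> fmap" where
  "relabel s M = (fst M, conjugate s (flags M) (tau0 M), conjugate s (flags M) (tau1 M),
     conjugate s (flags M) (tau2 M))"

lemma fst_relabel [simp]: "fst (relabel s M) = fst M"
  and flags_relabel [simp]: "flags (relabel s M) = flags M"
  by (simp_all add: relabel_def flags_def)

lemma tau_relabel:
  "tau0 (relabel s M) = conjugate s (flags M) (tau0 M)"
  "tau1 (relabel s M) = conjugate s (flags M) (tau1 M)"
  "tau2 (relabel s M) = conjugate s (flags M) (tau2 M)"
  by (simp_all add: relabel_def tau0_def tau1_def tau2_def)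

lemma map_iso_relabel:
  assumes "bij_betw s (flags M) (flags M)"
  shows "(M, relabel s M) \<in> map_iso"
  using assms conjugate_apply[OF assms] unfolding map_iso_def by (auto simp: tau_relabel)

lemma map_iso_sym:
  assumes "is_map M" and "(M, N) \<in> map_iso"
  shows "(N, M) \<in> map_iso"
proof -
  from assms(2) obtain s where "fst M = fst N" and s: "bij_betw s (flags M) (flags N)"
    and comm: "\<forall>x\<in>flags M. s (tau0 M x) = tau0 N (s x) \<and> s (tau1 M x) = tau1 N (s x) \<and>
      s (tau2 M x) = tau2 N (s x)"
    unfolding map_iso_def by auto
  let ?r = "inv_into (flags M) s"
  have "?r (tau0 N z) = tau0 M (?r z) \<and> ?r (tau1 N z) = tau1 M (?r z) \<and>
      ?r (tau2 N z) = tau2 M (?r z)" if "z \<in> flags N" for z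
  proof -
    obtain x where x: "x \<in> flags M" "z = s x"
      using s \<open>z \<in> flags N\<close> by (metis bij_betw_imp_surj_on imageE)
    have "tau0 M x \<in> flags M" "tau1 M x \<in> flags M" "tau2 M x \<in> flags M"
      using assms(1) x(1) fpf_involution_onD(2) unfolding is_map_def by blast+
    then show ?thesis
      using comm x s by (metis bij_betw_inv_into_left)
  qed
  then show ?thesis
    using \<open>fst M = fst N\<close> bij_betw_inv_into[OF s] unfolding map_iso_def by auto
qed

lemma map_iso_trans:
  assumes "(M, N) \<in> map_iso" and "(N, P) \<in> map_iso"
  shows "(M, P) \<in> map_iso"
proof -
  from assms obtain s s' where "fst M = fst N" "fst N = fst P"
    and s: "bij_betw s (flags M) (flags N)" and s': "bij_betw s' (flags N) (flags P)"
    and comm: "\<forall>x\<in>flags M. s (tau0 M x) = tau0 N (s x) \<and> s (tau1 M x) = tau1 N (s x) \<and>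
      s (tau2 M x) = tau2 N (s x)"
    and comm': "\<forall>x\<in>flags N. s' (tau0 N x) = tau0 P (s' x) \<and> s' (tau1 N x) = tau1 P (s' x) \<and>
      s' (tau2 N x) = tau2 P (s' x)"
    unfolding map_iso_def by auto
  moreover have "\<forall>x\<in>flags M. s x \<in> flags N"
    using s by (simp add: bij_betw_apply)
  ultimately show ?thesis
    unfolding map_iso_def using bij_betw_trans[OF s s'] by (auto intro!: exI[of _ "s' \<circ> s"])
qed

lemma map_iso_Image_eq:
  assumes "is_map A" and "is_map B" and "(A, N) \<in> map_iso" and "(B, N) \<in> map_iso"
  shows "map_iso `` {A} = map_iso `` {B}"
  using map_iso_trans[OF assms(3) map_iso_sym[OF assms(2,4)]]
    map_iso_trans[OF assms(4) map_iso_sym[OF assms(1,3)]]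
  by (auto intro: map_iso_trans)

lemma map_iso_Image_no_edges:
  assumes "fst M = 0"
  shows "map_iso `` {M} = {N. fst N = 0}"
  using assms by (auto simp: map_iso_def flags_def bij_betw_def)

locale map_with_edges =
  fixes M :: fmap
  assumes is_map: "is_map M" and edges_pos: "0 < fst M"
begin

abbreviation E :: nat where "E \<equiv> fst M"
abbreviation F :: "nat set" where "F \<equiv> flags M"

lemma flags_eq: "F = {..<4 * E}"
  by (simp add: flags_def)

lemma fpf_tau0: "fpf_involution_on F (tau0 M)"
  and fpf_tau1: "fpf_involution_on F (tau1 M)"
  and fpf_tau2: "fpf_involution_on F (tau2 M)"
  and tau0_tau2_commute: "tau0 M (tau2 M x) = tau2 M (tau0 M x)"
  and tau0_tau2_neq: "y \<in> F \<Longrightarrow> tau0 M (tau2 M y) \<noteq> y"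
  and connected: "num_orbits F [tau0 M, tau1 M, tau2 M] = 1"
  using is_map edges_pos unfolding is_map_def by auto

lemma tau_in_flags:
  assumes "y \<in> F"
  shows "tau0 M y \<in> F" and "tau1 M y \<in> F" and "tau2 M y \<in> F"
  using assms fpf_involution_onD(2) fpf_tau0 fpf_tau1 fpf_tau2 by blast+

sublocale involution_pair F "tau2 M" "tau1 M"
  by unfold_locales (simp add: flags_def, rule fpf_tau2, rule fpf_tau1)

lemma connected_closure:
  assumes "A \<subseteq> F" and "x \<in> A"
    and closed: "\<And>y. y \<in> A \<Longrightarrow> tau0 M y \<in> A \<and> tau1 M y \<in> A \<and> tau2 M y \<in> A"
  shows "A = F"
proof -
  let ?R = "orbit_rel F [tau0 M, tau1 M, tau2 M]"
  obtain C where C: "F // ?R = {C}"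
    using connected card_1_singletonE unfolding num_orbits_def by blast
  have "F \<subseteq> A"
  proof
    fix y assume "y \<in> F"
    then have "?R `` {x} \<in> F // ?R" and "?R `` {y} \<in> F // ?R"
      using assms(1,2) by (auto intro: quotientI)
    then have "?R `` {x} = ?R `` {y}"
      using C by simp
    moreover have "(y, y) \<in> ?R"
      by (simp add: orbit_rel_def)
    ultimately have "(x, y) \<in> ?R"
      by blast
    then have "(x, y) \<in> {(x, t x) | x t. x \<in> F \<and> t \<in> set [tau0 M, tau1 M, tau2 M]}\<^sup>*"
      by (simp only: orbit_rel_def)
    then show "y \<in> A"
    proof (induction rule: rtrancl_induct)
      case (step u v)
      then have "v = tau0 M u \<or> v = tau1 M u \<or> v = tau2 M u"
        by auto
      then show ?case
        using closed[OF step(3)] by auto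
    qed (rule assms(2))
  qed
  with assms(1) show ?thesis
    by blast
qed

definition vertex :: "nat \<Rightarrow> nat set" where
  "vertex y = orbit_rel F [tau1 M, tau2 M] `` {y}"

definition vertices :: "nat set set" where
  "vertices = F // orbit_rel F [tau1 M, tau2 M]"

lemma card_vertices: "card vertices = num_vertices M"
  using edges_pos by (simp add: vertices_def num_vertices_def num_orbits_def)

lemma vertices_eq: "vertices = vertex ` F"
  by (auto simp: vertices_def vertex_def quotient_def)

lemma finite_vertices: "finite vertices"
  by (simp add: vertices_eq flags_def)

lemma vertex_eq_walk: "y \<in> F \<Longrightarrow> vertex y = walk y ` {..<walk_period y}"
  unfolding vertex_def by (rule orbit_rel_Image_eq_walk)

lemma walk_in_vertex: "y \<in> F \<Longrightarrow> walk y i \<in> vertex y"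
  using vertex_eq_walk walk_mod walk_period(1) by (metis imageI lessThan_iff mod_less_divisor)

lemma vertex_subset: "y \<in> F \<Longrightarrow> vertex y \<subseteq> F"
  using vertex_eq_walk walk_in by auto

lemma vertex_eq: "y \<in> vertex x \<Longrightarrow> vertex y = vertex x"
  using orbit_rel_Image_eq[OF sym_orbit_rel, of "[tau1 M, tau2 M]" F x y] fpf_tau1 fpf_tau2
  by (auto simp: vertex_def)

definition base :: "nat set \<Rightarrow> nat" where
  "base C = (SOME y. y \<in> C)"

lemma base:
  assumes "C \<in> vertices"
  shows "base C \<in> F" and "vertex (base C) = C"
proof -
  obtain x where x: "x \<in> F" "C = vertex x"
    using assms vertices_eq by blast
  then have "base C \<in> C"
    using walk_in_vertex[of x 0] unfolding base_def by (metis someI walk.simps(1))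
  then show "base C \<in> F" "vertex (base C) = C"
    using x vertex_subset vertex_eq by auto
qed

definition flag_at :: "nat set \<Rightarrow> nat \<Rightarrow> nat" where
  "flag_at C = walk (base C)"

context
  fixes C assumes C: "C \<in> vertices"
begin

lemma card_vertex: "card C = walk_period (base C)"
proof -
  have "card (walk (base C) ` {..<walk_period (base C)}) = walk_period (base C)"
    using inj_on_walk[OF base(1)[OF C]] by (simp add: card_image)
  then show ?thesis
    using vertex_eq_walk[OF base(1)[OF C]] base(2)[OF C] by simp
qed

lemma vertex_flag_at: "C = flag_at C ` {..<card C}"
  using vertex_eq_walk[OF base(1)[OF C]] base(2)[OF C] card_vertex by (simp add: flag_at_def)

lemma inj_on_flag_at: "inj_on (flag_at C) {..<card C}"
  using inj_on_walk[OF base(1)[OF C]] card_vertex by (simp add: flag_at_def)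

lemma card_vertex_pos: "0 < card C"
  and even_card_vertex: "even (card C)"
  and flag_at_card: "flag_at C (card C) = flag_at C 0"
  using walk_period[OF base(1)[OF C]] card_vertex by (simp_all add: flag_at_def)

lemma flag_at_in_flags: "flag_at C i \<in> F"
  using walk_in[OF base(1)[OF C]] by (simp add: flag_at_def)

lemma vertex_flag_at_eq: "vertex (flag_at C i) = C"
  using vertex_eq[OF walk_in_vertex[OF base(1)[OF C]]] base(2)[OF C] by (simp add: flag_at_def)

lemma tau2_flag_at: "tau2 M (flag_at C i) = flag_at C (if even i then Suc i else i - 1)"
  by (simp add: flag_at_def a_walk del: walk.simps)

lemma tau1_flag_at:
  "tau1 M (flag_at C i) = flag_at C (if i = 0 then card C - 1 else if odd i then Suc i else i - 1)"
  using b_walk[OF base(1)[OF C]] card_vertex by (simp add: flag_at_def del: walk.simps)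

end

definition walk_pos :: "nat \<Rightarrow> nat" where
  "walk_pos y = inv_into {..<card (vertex y)} (flag_at (vertex y)) y"

lemma vertex_in_vertices: "y \<in> F \<Longrightarrow> vertex y \<in> vertices"
  by (simp add: vertices_eq)

lemma walk_pos:
  assumes "y \<in> F"
  shows "walk_pos y < card (vertex y)" and "flag_at (vertex y) (walk_pos y) = y"
proof -
  have y: "y \<in> flag_at (vertex y) ` {..<card (vertex y)}"
    using vertex_flag_at[OF vertex_in_vertices[OF assms]] walk_in_vertex[OF assms, of 0] by simp
  show "walk_pos y < card (vertex y)" "flag_at (vertex y) (walk_pos y) = y"
    using inv_into_into[OF y] f_inv_into_f[OF y] unfolding walk_pos_def by simp_all
qed

lemma walk_pos_flag_at: "C \<in> vertices \<Longrightarrow> i < card C \<Longrightarrow> walk_pos (flag_at C i) = i"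
  using inj_on_flag_at by (simp add: walk_pos_def vertex_flag_at_eq inv_into_f_f)

lemma sum_card_vertices: "(\<Sum>C\<in>vertices. card C) = 4 * E"
proof -
  have "\<Union>vertices = F"
    using vertex_subset walk_in_vertex[of _ 0] by (auto simp: vertices_eq)
  moreover have "pairwise disjnt vertices"
    by (auto simp: pairwise_def disjnt_def vertices_eq dest: vertex_eq)
  moreover have "finite C" if "C \<in> vertices" for C
    using that vertex_subset finite_subset[of C F] by (auto simp: vertices_eq flags_def)
  ultimately show ?thesis
    using card_Union_disjoint[of vertices] by (simp add: flags_def)
qed


definition block_start :: "nat set list \<Rightarrow> nat \<Rightarrow> nat" where
  "block_start xs k = (\<Sum>j<k. card (xs ! j))"

definition vertex_index :: "nat set list \<Rightarrow> nat \<Rightarrow> nat" where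
  "vertex_index xs y = inv_into {..<length xs} ((!) xs) (vertex y)"

text \<open>The flags of the k-th vertex of the list xs get consecutive labels from block_start xs k
  on, in the order of the alternating walk from its base flag.\<close>

definition label :: "nat set list \<Rightarrow> nat \<Rightarrow> nat" where
  "label xs y = block_start xs (vertex_index xs y) + walk_pos y"

lemma block_start_Suc: "block_start xs (Suc k) = block_start xs k + card (xs ! k)"
  by (simp add: block_start_def)

context
  fixes xs assumes xs: "xs \<in> permutations_of_set vertices"
begin

lemma set_xs: "set xs = vertices" and distinct_xs: "distinct xs"
  using xs by (auto simp: permutations_of_set_def)

lemma nth_xs_in_vertices: "k < length xs \<Longrightarrow> xs ! k \<in> vertices"
  using set_xs nth_mem by blast

lemma strict_mono_block_start: "strict_mono_on {..length xs} (block_start xs)"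
proof (rule strict_mono_onI)
  fix i j assume "i \<in> {..length xs}" "j \<in> {..length xs}" "i < j"
  then have "block_start xs i < block_start xs (Suc i)"
    using card_vertex_pos[OF nth_xs_in_vertices] by (simp add: block_start_Suc)
  also have "\<dots> \<le> block_start xs j"
    using \<open>i < j\<close> unfolding block_start_def by (intro sum_mono2) auto
  finally show "block_start xs i < block_start xs j" .
qed

lemma block_start_length: "block_start xs (length xs) = 4 * E"
proof -
  have "block_start xs (length xs) = sum_list (map card xs)"
    by (simp add: block_start_def sum_list_sum_nth atLeast0LessThan)
  also have "\<dots> = (\<Sum>C\<in>vertices. card C)"
    using distinct_xs set_xs by (metis sum_list_distinct_conv_sum_set)
  finally show ?thesis
    using sum_card_vertices by simp
qed

lemma even_block_start: "k \<le> length xs \<Longrightarrow> even (block_start xs k)"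
  by (induction k) (simp_all add: block_start_def even_card_vertex nth_xs_in_vertices)

lemma vertex_index:
  assumes "y \<in> F"
  shows "vertex_index xs y < length xs" and "xs ! vertex_index xs y = vertex y"
proof -
  have "vertex y \<in> set xs"
    using set_xs vertex_in_vertices[OF assms] by simp
  then have mem: "vertex y \<in> (!) xs ` {..<length xs}"
    by (metis imageI in_set_conv_nth lessThan_iff)
  show "vertex_index xs y < length xs"
    using inv_into_into[OF mem] unfolding vertex_index_def by simp
  show "xs ! vertex_index xs y = vertex y"
    using f_inv_into_f[OF mem] unfolding vertex_index_def .
qed

lemma label_flag_at:
  assumes "k < length xs" and "i < card (xs ! k)"
  shows "label xs (flag_at (xs ! k) i) = block_start xs k + i"
proof -
  have "vertex_index xs (flag_at (xs ! k) i) = k"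
    using assms(1) distinct_xs nth_xs_in_vertices[OF assms(1)]
    by (simp add: vertex_index_def vertex_flag_at_eq inj_on_nth inv_into_f_f)
  then show ?thesis
    using walk_pos_flag_at[OF nth_xs_in_vertices[OF assms(1)] assms(2)] by (simp add: label_def)
qed

lemma flag_cases:
  assumes "y \<in> F"
  obtains k i where "k < length xs" and "i < card (xs ! k)" and "y = flag_at (xs ! k) i"
  using vertex_index[OF assms] walk_pos[OF assms] by metis

lemma label_block:
  assumes "k < length xs" and "i < card (xs ! k)"
  shows "block_start xs k \<le> label xs (flag_at (xs ! k) i)"
    and "label xs (flag_at (xs ! k) i) < block_start xs (Suc k)"
  using assms by (simp_all add: label_flag_at block_start_Suc)

lemma label_less:
  assumes "y \<in> F"
  shows "label xs y < 4 * E"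
proof -
  obtain k i where k: "k < length xs" and i: "i < card (xs ! k)" and y: "y = flag_at (xs ! k) i"
    using flag_cases[OF assms] .
  have "block_start xs (Suc k) \<le> block_start xs (length xs)"
    using k strict_mono_on_leD[OF strict_mono_block_start] by simp
  then show ?thesis
    using label_block(2)[OF k i] block_start_length y by simp
qed

lemma inj_on_label: "inj_on (label xs) F"
proof (rule inj_onI)
  fix y y' assume "y \<in> F" "y' \<in> F" and eq: "label xs y = label xs y'"
  obtain k i where k: "k < length xs" "i < card (xs ! k)" and y: "y = flag_at (xs ! k) i"
    using flag_cases[OF \<open>y \<in> F\<close>] .
  obtain k' i' where k': "k' < length xs" "i' < card (xs ! k')" and y': "y' = flag_at (xs ! k') i'"
    using flag_cases[OF \<open>y' \<in> F\<close>] .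
  have "k = k'"
    using strict_mono_on_block_unique[OF strict_mono_block_start, of k k' "label xs y"]
      label_block[OF k] label_block[OF k'] k k' eq y y' by simp
  then show "y = y'"
    using eq label_flag_at[OF k] label_flag_at[OF k'] y y' by simp
qed

lemma bij_betw_label: "bij_betw (label xs) F F"
proof -
  have "label xs ` F \<subseteq> F"
    using label_less by (auto simp: flags_eq)
  then show ?thesis
    using inj_on_label by (simp add: bij_betw_def card_image card_subset_eq flags_def)
qed

lemma label_tau2:
  assumes "y \<in> F"
  shows "label xs (tau2 M y) = pair_swap E (label xs y)"
proof -
  obtain k i where k: "k < length xs" and i: "i < card (xs ! k)" and y: "y = flag_at (xs ! k) i"
    using flag_cases[OF assms] .
  let ?C = "xs ! k"
  have C: "?C \<in> vertices"
    using nth_xs_in_vertices[OF k] .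
  have "even (block_start xs k)"
    using even_block_start k by simp
  moreover have "label xs y < 4 * E"
    using label_less[OF assms] .
  moreover have "even i \<Longrightarrow> Suc i < card ?C"
    using i even_card_vertex[OF C] by (metis Suc_lessI even_Suc)
  ultimately show ?thesis
    using i label_flag_at[OF k] unfolding y tau2_flag_at[OF C]
    by (auto simp: pair_swap_def dest: odd_pos)
qed

lemma label_tau1:
  assumes "y \<in> F"
  shows "label xs (tau1 M y) = block_cycle E (block_start xs ` {..<length xs}) (label xs y)"
proof -
  obtain k i where k: "k < length xs" and i: "i < card (xs ! k)" and y: "y = flag_at (xs ! k) i"
    using flag_cases[OF assms] .
  let ?C = "xs ! k" and ?s = "block_start xs k"
  have C: "?C \<in> vertices"
    using nth_xs_in_vertices[OF k] .
  have ly: "label xs y = ?s + i"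
    using label_flag_at[OF k i] y by simp
  have "block_cycle E (block_start xs ` {..<length xs}) (label xs y) =
    (if even (?s + i) then (if ?s + i = ?s then ?s + card ?C - 1 else ?s + i - 1)
     else (if Suc (?s + i) = ?s + card ?C then ?s else Suc (?s + i)))"
    using block_cycle_in_block[OF strict_mono_block_start block_start_length k, of "?s + i"]
      i ly by (simp add: block_start_Suc)
  moreover have "label xs (flag_at ?C j) = ?s + j" if "j < card ?C" for j
    using label_flag_at[OF k that] .
  moreover have "even ?s"
    using even_block_start k by simp
  moreover have "odd i \<Longrightarrow> Suc i = card ?C \<Longrightarrow> flag_at ?C (Suc i) = flag_at ?C 0"
    using flag_at_card[OF C] by simp
  ultimately show ?thesis
    using i card_vertex_pos[OF C] unfolding y tau1_flag_at[OF C]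
    by (auto simp: Suc_lessI)
qed

lemma label_surj:
  assumes "z \<in> F"
  obtains y where "y \<in> F" and "z = label xs y"
  using bij_betw_label assms by (metis bij_betw_imp_surj_on imageE)

lemma tau_relabel_label:
  assumes "y \<in> F"
  shows "tau0 (relabel (label xs) M) (label xs y) = label xs (tau0 M y)"
    and "tau1 (relabel (label xs) M) (label xs y) = label xs (tau1 M y)"
    and "tau2 (relabel (label xs) M) (label xs y) = label xs (tau2 M y)"
  using conjugate_apply[OF bij_betw_label assms] by (simp_all add: tau_relabel)

lemma tau_relabel_label_outside:
  assumes "\<not> z < 4 * E"
  shows "tau0 (relabel (label xs) M) z = z" and "tau1 (relabel (label xs) M) z = z"
    and "tau2 (relabel (label xs) M) z = z"
  using conjugate_outside[OF bij_betw_label] assms by (simp_all add: tau_relabel flags_eq)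

lemma fun_eq_on_labels:
  fixes f g :: "nat \<Rightarrow> nat"
  assumes "\<And>y. y \<in> F \<Longrightarrow> f (label xs y) = g (label xs y)" and "\<And>z. \<not> z < 4 * E \<Longrightarrow> f z = g z"
  shows "f = g"
proof
  fix z
  show "f z = g z"
  proof (cases "z \<in> F")
    case True
    then obtain y where "y \<in> F" "z = label xs y"
      by (rule label_surj)
    then show ?thesis
      using assms(1) by simp
  qed (use assms(2) flags_eq in simp)
qed

lemma tau2_relabel_label: "tau2 (relabel (label xs) M) = pair_swap E"
  by (rule fun_eq_on_labels)
    (simp_all add: tau_relabel_label label_tau2 tau_relabel_label_outside pair_swap_def)

lemma tau1_relabel_label:
  "tau1 (relabel (label xs) M) = block_cycle E (block_start xs ` {..<length xs})"
  by (rule fun_eq_on_labels)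
    (simp_all add: tau_relabel_label label_tau1 tau_relabel_label_outside block_cycle_def)

lemma block_starts_subset: "block_start xs ` {..<length xs} \<subseteq> (\<lambda>j. 2 * j) ` {..<2 * E}"
proof
  fix z assume "z \<in> block_start xs ` {..<length xs}"
  then obtain k where k: "k < length xs" and z: "z = block_start xs k"
    by auto
  have "block_start xs k < block_start xs (length xs)"
    using k strict_mono_onD[OF strict_mono_block_start] by simp
  then show "z \<in> (\<lambda>j. 2 * j) ` {..<2 * E}"
    using even_block_start[of k] k block_start_length unfolding z by (auto elim!: evenE)
qed

lemma compatible_t0_relabel_label: "compatible_t0 E (tau0 (relabel (label xs) M))"
  unfolding compatible_t0_def
proof (intro conjI allI impI)
  let ?N = "relabel (label xs) M"
  show "fpf_involution_on {..<4 * E} (tau0 ?N)"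
    using fpf_involution_on_conjugate[OF bij_betw_label fpf_tau0] by (simp add: tau_relabel flags_eq)
  fix z assume "z < 4 * E"
  then obtain y where y: "y \<in> F" and z: "z = label xs y"
    using label_surj flags_eq by blast
  have y02: "tau0 M y \<in> F" "tau2 M y \<in> F" "tau0 M (tau2 M y) \<in> F"
    using tau_in_flags y by blast+
  have "tau0 ?N (pair_swap E z) = label xs (tau0 M (tau2 M y))"
    using y y02 by (simp add: z tau_relabel_label flip: tau2_relabel_label)
  moreover have "label xs (tau0 M (tau2 M y)) = pair_swap E (tau0 ?N z)"
    using y y02 by (simp add: z tau_relabel_label tau0_tau2_commute flip: tau2_relabel_label)
  moreover have "label xs (tau0 M (tau2 M y)) \<noteq> z"
    using inj_on_eq_iff[OF inj_on_label y02(3) y] tau0_tau2_neq[OF y] z by simp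
  ultimately show "tau0 ?N (pair_swap E z) = pair_swap E (tau0 ?N z)"
    and "tau0 ?N (pair_swap E z) \<noteq> z"
    by simp_all
qed

lemma relabel_label_normal: "relabel (label xs) M \<in> normal_maps E"
  using tau1_relabel_label tau2_relabel_label block_starts_subset compatible_t0_relabel_label
  by (auto simp: normal_maps_def)

end

lemma relabel_eq_imp_eq_on_flags:
  assumes s: "bij_betw s F F" and s': "bij_betw s' F F"
    and eq: "relabel s M = relabel s' M" and x: "x \<in> F" "s x = s' x"
  shows "\<forall>y\<in>F. s y = s' y"
proof -
  have "{y \<in> F. s y = s' y} = F"
  proof (rule connected_closure)
    fix y assume y: "y \<in> {y \<in> F. s y = s' y}"
    then have yF: "y \<in> F" and "s y = s' y"
      by simp_all
    have "s (t y) = s' (t y)" if "conjugate s F t = conjugate s' F t" for t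
    proof -
      have "s (t y) = conjugate s F t (s y)"
        using conjugate_apply[OF s yF] by simp
      also have "\<dots> = conjugate s' F t (s' y)"
        using that \<open>s y = s' y\<close> by simp
      also have "\<dots> = s' (t y)"
        using conjugate_apply[OF s' yF] by simp
      finally show ?thesis .
    qed
    then have "s (tau0 M y) = s' (tau0 M y)" "s (tau1 M y) = s' (tau1 M y)" "s (tau2 M y) = s' (tau2 M y)"
      using arg_cong[OF eq, of tau0] arg_cong[OF eq, of tau1] arg_cong[OF eq, of tau2]
      by (simp_all add: tau_relabel)
    then show "tau0 M y \<in> {y \<in> F. s y = s' y} \<and> tau1 M y \<in> {y \<in> F. s y = s' y} \<and>
        tau2 M y \<in> {y \<in> F. s y = s' y}"
      using tau_in_flags y by simp
  qed (use x in auto)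
  then show ?thesis
    by blast
qed

lemma list_eq_if_label_eq:
  assumes xs: "xs \<in> permutations_of_set vertices" and xs': "xs' \<in> permutations_of_set vertices"
    and eq: "\<forall>y\<in>F. label xs y = label xs' y"
  shows "xs = xs'"
proof -
  have len: "length xs = length xs'"
    using xs xs' length_finite_permutations_of_set finite_vertices by metis
  have "k < length xs \<longrightarrow> xs ! k = xs' ! k" for k
  proof (induction k rule: less_induct)
    case (less k)
    show ?case
    proof
      assume k: "k < length xs"
      let ?y = "flag_at (xs ! k) 0"
      have C: "xs ! k \<in> vertices"
        using nth_xs_in_vertices[OF xs k] .
      have y: "?y \<in> F"
        using flag_at_in_flags[OF C] .
      have "block_start xs k = block_start xs' k"
        using less k by (simp add: block_start_def)
      also have "block_start xs k = label xs ?y"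
        using label_flag_at[OF xs k card_vertex_pos[OF C]] by simp
      also have "\<dots> = block_start xs' (vertex_index xs' ?y)"
        using eq y walk_pos_flag_at[OF C card_vertex_pos[OF C]] by (simp add: label_def)
      finally have "vertex_index xs' ?y = k"
        using strict_mono_on_eqD[OF strict_mono_block_start[OF xs']] vertex_index(1)[OF xs' y] k len
        by simp
      then show "xs ! k = xs' ! k"
        using vertex_index(2)[OF xs' y] vertex_flag_at_eq[OF C] by simp
    qed
  qed
  then show ?thesis
    using len by (simp add: nth_equalityI)
qed

definition normal_forms :: "fmap set" where
  "normal_forms = (\<lambda>xs. relabel (label xs) M) ` permutations_of_set vertices"

lemma normal_forms_subset: "normal_forms \<subseteq> normal_maps E"
  using relabel_label_normal by (auto simp: normal_forms_def)

lemma map_iso_normal_forms: "N \<in> normal_forms \<Longrightarrow> (M, N) \<in> map_iso"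
  using map_iso_relabel[OF bij_betw_label] by (auto simp: normal_forms_def)

text \<open>A normal form together with the label of one fixed flag determines the ordering of the
  vertices, by connectivity.\<close>

lemma fact_card_vertices_le: "fact (card vertices) \<le> 4 * E * card normal_forms"
proof -
  let ?f = "\<lambda>xs. (relabel (label xs) M, label xs 0)"
  have zero: "0 \<in> F"
    using edges_pos by (simp add: flags_eq)
  have "inj_on ?f (permutations_of_set vertices)"
  proof (rule inj_onI)
    fix xs xs' assume xs: "xs \<in> permutations_of_set vertices"
      and xs': "xs' \<in> permutations_of_set vertices" and "?f xs = ?f xs'"
    then have "\<forall>y\<in>F. label xs y = label xs' y"
      using relabel_eq_imp_eq_on_flags[OF bij_betw_label[OF xs] bij_betw_label[OF xs'] _ zero]
      by simp
    then show "xs = xs'"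
      by (rule list_eq_if_label_eq[OF xs xs'])
  qed
  moreover have "?f ` permutations_of_set vertices \<subseteq> normal_forms \<times> {..<4 * E}"
    using label_less zero by (auto simp: normal_forms_def)
  moreover have "finite normal_forms"
    by (simp add: normal_forms_def finite_vertices)
  ultimately have "card (permutations_of_set vertices) \<le> card (normal_forms \<times> {..<4 * E})"
    by (intro card_inj_on_le) auto
  then show ?thesis
    using finite_vertices by (simp add: card_cartesian_product mult.commute)
qed

end

section \<open>Counting isomorphism classes\<close>

lemma normal_forms_disjoint:
  assumes A: "map_with_edges A" and B: "map_with_edges B"
    and "map_iso `` {A} \<noteq> map_iso `` {B}"
  shows "map_with_edges.normal_forms A \<inter> map_with_edges.normal_forms B = {}"
proof (rule ccontr)
  assume "map_with_edges.normal_forms A \<inter> map_with_edges.normal_forms B \<noteq> {}"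
  then obtain N where "(A, N) \<in> map_iso" and "(B, N) \<in> map_iso"
    using map_with_edges.map_iso_normal_forms[OF A] map_with_edges.map_iso_normal_forms[OF B]
    by blast
  then show False
    using map_iso_Image_eq map_with_edges.is_map[OF A] map_with_edges.is_map[OF B] assms(3)
    by blast
qed

lemma card_quotient_map_iso_mult_fact_le:
  assumes maps: "\<And>M. M \<in> Ms \<Longrightarrow> is_map M \<and> num_vertices M = n \<and> fst M = E" and "0 < E"
  shows "card (Ms // map_iso) * fact n \<le> 4 * E * card (normal_maps E)"
proof (cases "finite (Ms // map_iso)")
  case True
  let ?Q = "Ms // map_iso"
  have "\<forall>q\<in>?Q. \<exists>M\<in>Ms. q = map_iso `` {M}"
    by (auto elim: quotientE)
  then obtain rep where rep: "\<And>q. q \<in> ?Q \<Longrightarrow> rep q \<in> Ms \<and> q = map_iso `` {rep q}"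
    by metis
  have map_rep: "map_with_edges (rep q)" if "q \<in> ?Q" for q
    using maps rep[OF that] \<open>0 < E\<close> by unfold_locales auto
  let ?T = "\<lambda>q. map_with_edges.normal_forms (rep q)"
  have T_subset: "?T q \<subseteq> normal_maps E" if "q \<in> ?Q" for q
    using map_with_edges.normal_forms_subset[OF map_rep[OF that]] maps rep[OF that] by simp
  have finite_T: "finite (?T q)" if "q \<in> ?Q" for q
    using T_subset[OF that] finite_normal_maps by (rule finite_subset)
  have disjoint: "?T q \<inter> ?T q' = {}" if "q \<in> ?Q" and "q' \<in> ?Q" and "q \<noteq> q'" for q q'
    using normal_forms_disjoint[OF map_rep map_rep] rep that by metis
  have "card ?Q * fact n = (\<Sum>q\<in>?Q. fact n)"
    by simp
  also have "\<dots> \<le> (\<Sum>q\<in>?Q. 4 * E * card (?T q))"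
    using map_with_edges.fact_card_vertices_le[OF map_rep] map_with_edges.card_vertices[OF map_rep]
      maps rep by (intro sum_mono) simp
  also have "\<dots> = 4 * E * (\<Sum>q\<in>?Q. card (?T q))"
    by (simp add: sum_distrib_left)
  also have "(\<Sum>q\<in>?Q. card (?T q)) = card (\<Union>q\<in>?Q. ?T q)"
    using finite_T disjoint by (intro card_UN_disjoint[symmetric] True) auto
  also have "card (\<Union>q\<in>?Q. ?T q) \<le> card (normal_maps E)"
    using T_subset finite_normal_maps by (intro card_mono) auto
  finally show ?thesis
    by simp
qed simp

lemma card_quotient_map_iso_no_edges:
  assumes "\<And>M. M \<in> Ms \<Longrightarrow> fst M = 0"
  shows "card (Ms // map_iso) \<le> 1"
proof -
  have "Ms // map_iso \<subseteq> {{N. fst N = 0}}"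
  proof
    fix X assume "X \<in> Ms // map_iso"
    then obtain M where "M \<in> Ms" and "X = map_iso `` {M}"
      by (auto elim: quotientE)
    then show "X \<in> {{N. fst N = 0}}"
      using map_iso_Image_no_edges[OF assms] by simp
  qed
  then have "card (Ms // map_iso) \<le> card {{N :: fmap. fst N = 0}}"
    by (intro card_mono) simp_all
  then show ?thesis
    by simp
qed

lemma UMap_reps_edges:
  assumes "M \<in> UMap_reps n h" and "1 \<le> n"
  shows "is_map M" and "num_vertices M = n" and "fst M = n + h - 1"
proof -
  show "is_map M" "num_vertices M = n"
    using assms(1) by (simp_all add: UMap_reps_def)
  have "euler_genus M = int h" "num_faces M = 1"
    using assms(1) by (simp_all add: UMap_reps_def in_N_def)
  then show "fst M = n + h - 1"
    using \<open>num_vertices M = n\<close> assms(2) by (simp add: euler_genus_def num_edges_def)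
qed
lemma num_UMap_no_edges:
  assumes "1 \<le> n" and "n + h = 1"
  shows "num_UMap n h \<le> 1"
  using card_quotient_map_iso_no_edges[of "UMap_reps n h"] UMap_reps_edges(3) assms
  by (simp add: num_UMap_def)

lemma num_UMap_mult_fact_le:
  assumes "1 \<le> n" and "n + h = Suc E" and "0 < E"
  shows "num_UMap n h * fact n \<le> 4 * E * (16 ^ E * (4 * E) ^ E)"
proof -
  have "num_UMap n h * fact n \<le> 4 * E * card (normal_maps E)"
    using card_quotient_map_iso_mult_fact_le[of "UMap_reps n h" n E] UMap_reps_edges assms
    by (simp add: num_UMap_def)
  also have "\<dots> \<le> 4 * E * (16 ^ E * (4 * E) ^ E)"
    using card_normal_maps by simp
  finally show ?thesis .
qed

section \<open>Estimates\<close>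

lemma power_div_fact_le_exp:
  fixes x :: real
  assumes "0 \<le> x"
  shows "x ^ k / fact k \<le> exp x"
proof -
  have sums: "(\<lambda>j. x ^ j / fact j) sums exp x"
    using exp_converges[of x] by (simp add: divide_inverse mult.commute)
  have "(\<Sum>j\<in>{k}. x ^ j / fact j) \<le> (\<Sum>j. x ^ j / fact j)"
    using assms sums_summable[OF sums] by (intro sum_le_suminf) auto
  then show ?thesis
    using sums_unique[OF sums] by simp
qed

lemma power_le_exp_mult_power:
  fixes x :: real
  assumes "0 \<le> x"
  shows "x ^ k \<le> exp x * real k ^ k"
proof (cases "k = 0")
  case False
  have "x / k \<le> exp (x / k)"
    using exp_ge_add_one_self[of "x / k"] by linarith
  then have "(x / k) ^ k \<le> exp (x / k) ^ k"
    using assms by (intro power_mono) auto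
  also have "\<dots> = exp x"
    using False by (simp flip: exp_of_nat_mult)
  finally show ?thesis
    using False by (simp add: power_divide divide_le_eq mult.commute)
qed (use assms in simp)

lemma fact_le_fact_mult_power: "n \<le> m \<Longrightarrow> fact m \<le> fact n * m ^ (m - n)"
  using fact_div_fact_le_pow[of "m - n" m] fact_dvd[of n m]
  by (metis diff_diff_cancel diff_le_self dvd_mult_div_cancel mult_le_mono2)

lemma linear_mult_exp_half_le: "real m * exp (real m / 2) \<le> 7 * 2 ^ m"
proof -
  have "exp (1 / 2 :: real) ^ 2 \<le> (7 / 4) ^ 2"
    using exp_le by (simp add: power2_eq_square flip: exp_add)
  then have half: "exp (1 / 2 :: real) \<le> 7 / 4"
    by (rule power2_le_imp_le) simp
  have "real m \<le> 7 * (8 / 7) ^ m"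
    using Bernoulli_inequality[of "1 / 7 :: real" m] by simp
  moreover have "exp (real m / 2) \<le> (7 / 4) ^ m"
    using exp_of_nat_mult[of m "1 / 2 :: real"] half by (simp add: power_mono)
  ultimately have "real m * exp (real m / 2) \<le> 7 * (8 / 7) ^ m * (7 / 4) ^ m"
    by (intro mult_mono) auto
  also have "\<dots> = 7 * 2 ^ m"
    by (simp add: mult.assoc flip: power_mult_distrib)
  finally show ?thesis .
qed

lemma fact_le_fact_mult_power_excess:
  assumes "1 \<le> n" and "n + h = Suc E"
  shows "fact E \<le> fact n * E ^ h"
proof (cases "h = 0")
  case True
  then show ?thesis
    using assms fact_mono[of E n] by simp
next
  case False
  then have "fact E \<le> fact n * E ^ (E - n)"
    using assms fact_le_fact_mult_power[of n E] by simp
  also have "\<dots> \<le> fact n * E ^ h"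
    using assms False by (intro mult_le_mono2 power_increasing) auto
  finally show ?thesis .
qed

lemma power_self_le:
  assumes "1 \<le> n" and "n + h = Suc E"
  shows "real ((4 * E) ^ E) \<le> 4 ^ E * exp E ^ 2 * real h ^ h * fact n"
proof -
  have "real (fact E) \<le> real (fact n * E ^ h)"
    using fact_le_fact_mult_power_excess[OF assms] by (rule of_nat_mono)
  then have fact_E: "fact E \<le> fact n * real E ^ h"
    by simp
  have "real ((4 * E) ^ E) = 4 ^ E * real E ^ E"
    by (simp add: power_mult_distrib)
  also have "\<dots> \<le> 4 ^ E * (exp E * fact E)"
    using power_div_fact_le_exp[of "real E" E] by (simp add: divide_le_eq mult.commute)
  also have "\<dots> \<le> 4 ^ E * (exp E * (fact n * (exp E * real h ^ h)))"
    using power_le_exp_mult_power[of "real E" h]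
    by (intro mult_left_mono order_trans[OF fact_E] mult_left_mono) auto
  finally show ?thesis
    by (simp add: power2_eq_square mult_ac)
qed

lemma count_bound:
  fixes n h E :: nat
  assumes "1 \<le> n" and E: "n + h = Suc E"
  shows "real (4 * E * (16 ^ E * (4 * E) ^ E))
    \<le> (2 ^ 7 * exp (3 / 2)) ^ (n + h) * real h ^ h * fact n"
proof -
  have "real (4 * E * (16 ^ E * (4 * E) ^ E))
      \<le> 4 * E * 16 ^ E * (4 ^ E * exp E ^ 2 * real h ^ h * fact n)"
    using power_self_le[OF assms] by (simp add: mult_left_mono)
  also have "\<dots> = 4 * 64 ^ E * (E * exp (E / 2)) * exp (3 * E / 2) * real h ^ h * fact n"
  proof -
    have "exp (real E) ^ 2 = exp (E / 2) * exp (3 * E / 2)"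
      by (simp add: power2_eq_square flip: exp_add)
    moreover have "(64 :: real) ^ E = 16 ^ E * 4 ^ E"
      by (simp flip: power_mult_distrib)
    ultimately show ?thesis
      by (simp add: mult_ac)
  qed
  also have "\<dots> \<le> 4 * 64 ^ E * (7 * 2 ^ E) * exp (3 * E / 2) * real h ^ h * fact n"
    using linear_mult_exp_half_le[of E] by (intro mult_right_mono mult_left_mono) auto
  also have "\<dots> \<le> 128 * 128 ^ E * (exp (3 * E / 2) * exp (3 / 2)) * real h ^ h * fact n"
  proof -
    have "4 * 64 ^ E * (7 * 2 ^ E) \<le> (128 * 128 ^ E :: real)"
      by (simp add: mult.assoc flip: power_mult_distrib)
    moreover have "exp (3 * E / 2) \<le> exp (3 * E / 2) * exp (3 / 2)"
      by simp
    ultimately show ?thesis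
      by (intro mult_right_mono mult_mono[of _ "128 * 128 ^ E"]) auto
  qed
  also have "\<dots> = (2 ^ 7 * exp (3 / 2)) ^ (n + h) * real h ^ h * fact n"
  proof -
    have "exp (3 * E / 2) * exp (3 / 2) = exp (3 / 2 :: real) ^ Suc E"
      unfolding exp_of_nat_mult[symmetric] by (simp add: algebra_simps flip: exp_add)
    moreover have "(2 ^ 7 * exp (3 / 2) :: real) ^ (n + h) = 128 * 128 ^ E * exp (3 / 2) ^ Suc E"
      by (simp only: E power_mult_distrib power_Suc) simp
    ultimately show ?thesis
      by (simp only:)
  qed
  finally show ?thesis .
qed


theorem lemma10:
  fixes n h :: nat
  assumes "n \<ge> 1" and "even h"
  shows "real (num_UMap n h) \<le> (2 ^ 7 * exp (3 / 2)) ^ (n + h) * real h ^ h"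
proof -
  obtain E where E: "n + h = Suc E"
    using assms(1) by (cases "n + h") auto
  show ?thesis
  proof (cases "E = 0")
    case True
    then have "n = 1" and "h = 0" and "num_UMap n h \<le> 1"
      using E assms(1) num_UMap_no_edges by auto
    moreover have "(1 :: real) \<le> 128 * exp (3 / 2)"
      using exp_ge_add_one_self[of "3 / 2 :: real"] by linarith
    ultimately show ?thesis
      by simp
  next
    case False
    then have "num_UMap n h * fact n \<le> 4 * E * (16 ^ E * (4 * E) ^ E)"
      using num_UMap_mult_fact_le[OF assms(1) E] by simp
    then have "real (num_UMap n h * fact n) \<le> real (4 * E * (16 ^ E * (4 * E) ^ E))"
      by (rule of_nat_mono)
    then have "real (num_UMap n h) * fact n \<le> real (4 * E * (16 ^ E * (4 * E) ^ E))"
      by simp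
    also have "\<dots> \<le> (2 ^ 7 * exp (3 / 2)) ^ (n + h) * real h ^ h * fact n"
      using count_bound[OF assms(1) E] .
    finally show ?thesis
      by simp
  qed
qed

end
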